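(* Let $c$ be constant. Then for all integers $a\ge b\ge0$, $$Y(z^a\bar z^b)=az^{a-1}\bar z^b-mc\sum_{0\le k\le (a-b-1)/m}(-1)^{mk}z^{a-mk-1}\bar z^{b+mk},$$ and for all integers $b\ge a\ge0$, $$Y(z^a\bar z^b)=az^{a-1}\bar z^b+mc\sum_{1\le k\le (b-a)/m}(-1)^{mk}z^{a+mk-1}\bar z^{b-mk}.$$
   Context: Let $m\ge2$, $\zeta=e^{2\pi i/m}$, and let $z,\bar z$ be independent variables. For $j=0,\dots,m-1$ let $s_j$ be the algebra automorphism of $\mathbb C[z,\bar z]$ with $s_j(z)=-\zeta^j\bar z$, $s_j(\bar z)=-\zeta^{-j}z$ (these generate the dihedral group $I_2(m)$; the $s_j$ are its reflections). For a constant $c\in\mathbb C$ define the (Dunkl) operator $Y$ on $\mathbb C[z,\bar z]$ by $Y(q)=\frac{\partial q}{\partial z}-c\sum_{j=0}^{m-1}\frac{q-s_j(q)}{z+\zeta^j\bar z}$. *)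

theory Defs
  imports Complex_Main "HOL-Computational_Algebra.Polynomial"
begin

text \<open>C[z, zbar] is represented as complex poly poly: the outer variable is z,
  coefficients are polynomials in zbar.\<close>

definition Zv :: "complex poly poly" where "Zv = [:0, 1:]"
definition Zbv :: "complex poly poly" where "Zbv = [:[:0, 1:]:]"

definition const2 :: "complex \<Rightarrow> complex poly poly" where "const2 x = [:[:x:]:]"

text \<open>Substitution z := u, zbar := v (a ring homomorphism of C[z,zbar]).\<close>
definition subst2 :: "complex poly poly \<Rightarrow> complex poly poly \<Rightarrow> complex poly poly \<Rightarrow> complex poly poly" where
  "subst2 q u v = (\<Sum>i\<le>degree q. poly (map_poly const2 (coeff q i)) v * u ^ i)"

definition zeta :: "nat \<Rightarrow> complex" where "zeta m = cis (2 * pi / real m)"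

definition refl_s :: "nat \<Rightarrow> nat \<Rightarrow> complex poly poly \<Rightarrow> complex poly poly" where
  "refl_s m j q = subst2 q (const2 (- (zeta m ^ j)) * Zbv) (const2 (- inverse (zeta m ^ j)) * Zv)"

text \<open>Dunkl operator Y; the division is exact polynomial division in C[z,zbar].\<close>
definition dunklY :: "nat \<Rightarrow> complex \<Rightarrow> complex poly poly \<Rightarrow> complex poly poly" where
  "dunklY m c q = pderiv q - const2 c *
     (\<Sum>j<m. (q - refl_s m j q) div (Zv + const2 (zeta m ^ j) * Zbv))"

end

theory Submission
  imports Defs
begin

text \<open>
  With w = zeta^j, the reflection s_j sends z^a zbar^b to (-w)^a (-1/w)^b z^b zbar^a. For a = b + n
  the difference q - s_j q is therefore (z zbar)^b (z^n - u^n) with u = -w zbar, and z - u = z + w zbar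
  is exactly the divisor, so the quotient is the geometric sum (z zbar)^b sum_{i<n} z^(n-1-i) u^i.
  For a <= b the roles of z and zbar are exchanged and w is replaced by 1/w. Summing over the m
  reflections, the coefficient of the i-th monomial becomes sum_j (-zeta^(+-j))^i, which by
  orthogonality of the m-th roots of unity is m (-1)^i when m divides i and 0 otherwise.
\<close>

lemma const2_0: "const2 0 = 0"
  and const2_1: "const2 1 = 1"
  and const2_add: "const2 (x + y) = const2 x + const2 y"
  and const2_minus: "const2 (- x) = - const2 x"
  and const2_mult: "const2 (x * y) = const2 x * const2 y"
  by (simp_all add: const2_def one_pCons)

lemma const2_power: "const2 (x ^ n) = const2 x ^ n"
  by (induction n) (simp_all add: const2_1 const2_mult)

lemma const2_sum: "const2 (sum f A) = (\<Sum>x\<in>A. const2 (f x))"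
  by (induction A rule: infinite_finite_induct) (simp_all add: const2_0 const2_add)

lemma const2_of_nat: "const2 (of_nat n) = of_nat n"
  by (simp add: const2_def of_nat_poly)

lemma monomial_eq_monom: "Zv ^ a * Zbv ^ b = monom (monom 1 b) a"
  by (simp add: Zv_def Zbv_def monom_altdef poly_const_pow smult_monom mult.commute)

lemma subst2_monomial: "subst2 (Zv ^ a * Zbv ^ b) u v = u ^ a * v ^ b"
proof -
  have "subst2 (Zv ^ a * Zbv ^ b) u v = (\<Sum>i\<le>a. if i = a then u ^ a * v ^ b else 0)"
    unfolding subst2_def monomial_eq_monom
    by (intro sum.cong)
      (auto simp: degree_monom_eq map_poly_monom poly_monom const2_def[symmetric] const2_0 const2_1 mult.commute)
  then show ?thesis by simp
qed

lemma pderiv_monomial: "pderiv (Zv ^ a * Zbv ^ b) = const2 (of_nat a) * Zv ^ (a - 1) * Zbv ^ b"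
proof -
  have "Zbv ^ b = [:monom 1 b:]"
    by (simp add: Zbv_def monom_altdef poly_const_pow)
  then show ?thesis
    by (simp add: Zv_def const2_of_nat of_nat_poly pderiv_smult pderiv_power pderiv_pCons mult.commute)
qed

definition reflection :: "complex \<Rightarrow> complex poly poly \<Rightarrow> complex poly poly" where
  "reflection w q = subst2 q (const2 (- w) * Zbv) (const2 (- inverse w) * Zv)"

lemma refl_s_eq_reflection: "refl_s m j = reflection (zeta m ^ j)"
  by (simp add: fun_eq_iff refl_s_def reflection_def)

definition reflection_quotient_sum :: "nat \<Rightarrow> complex poly poly \<Rightarrow> complex poly poly" where
  "reflection_quotient_sum m q = (\<Sum>j<m. (q - refl_s m j q) div (Zv + const2 (zeta m ^ j) * Zbv))"

lemma dunklY_eq: "dunklY m c q = pderiv q - const2 c * reflection_quotient_sum m q"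
  by (simp add: dunklY_def reflection_quotient_sum_def)

lemma reflection_monomial:
  "reflection w (Zv ^ a * Zbv ^ b) = const2 ((- w) ^ a * (- inverse w) ^ b) * Zv ^ b * Zbv ^ a"
  unfolding reflection_def subst2_monomial
  by (simp add: const2_mult const2_power power_mult_distrib mult_ac)

lemma root_line_nonzero: "Zv + const2 w * Zbv \<noteq> 0"
proof
  assume "Zv + const2 w * Zbv = 0"
  then have "coeff (Zv + const2 w * Zbv) 1 = 0" by simp
  then show False by (simp add: Zv_def Zbv_def const2_def)
qed

lemma power_diff_factor:
  fixes x y :: "'a::comm_ring_1"
  shows "x ^ n - y ^ n = (x - y) * (\<Sum>i<n. x ^ (n - Suc i) * y ^ i)"
  using power_diff_sumr2[of y n x] by (simp add: algebra_simps)

lemma reflection_difference_monomial_ge: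
  assumes "w \<noteq> 0" "b \<le> a"
  shows "Zv ^ a * Zbv ^ b - reflection w (Zv ^ a * Zbv ^ b)
    = (Zv + const2 w * Zbv) * (\<Sum>i<a - b. const2 ((- w) ^ i) * Zv ^ (a - i - 1) * Zbv ^ (b + i))"
proof -
  obtain n where a: "a = b + n" using assms(2) le_Suc_ex by blast
  define u where "u = const2 (- w) * Zbv"
  have "(- w) ^ (b + n) * (- inverse w) ^ b = (- w) ^ n"
    using assms(1) by (simp add: power_add power_mult_distrib[symmetric])
  then have "reflection w (Zv ^ a * Zbv ^ b) = const2 ((- w) ^ n) * Zv ^ b * Zbv ^ (b + n)"
    by (simp add: reflection_monomial a)
  also have "\<dots> = Zv ^ b * Zbv ^ b * u ^ n"
    by (simp add: u_def const2_mult const2_power power_add power_mult_distrib mult_ac)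
  finally have "reflection w (Zv ^ a * Zbv ^ b) = Zv ^ b * Zbv ^ b * u ^ n" .
  then have "Zv ^ a * Zbv ^ b - reflection w (Zv ^ a * Zbv ^ b) = Zv ^ b * Zbv ^ b * (Zv ^ n - u ^ n)"
    by (simp add: a power_add algebra_simps)
  also have "\<dots> = (Zv + const2 w * Zbv) * (\<Sum>i<n. Zv ^ b * Zbv ^ b * (Zv ^ (n - Suc i) * u ^ i))"
    by (simp add: power_diff_factor u_def const2_minus const2_mult sum_distrib_left mult_ac)
  also have "(\<Sum>i<n. Zv ^ b * Zbv ^ b * (Zv ^ (n - Suc i) * u ^ i))
      = (\<Sum>i<n. const2 ((- w) ^ i) * Zv ^ (a - i - 1) * Zbv ^ (b + i))"
  proof (intro sum.cong refl)
    fix i assume "i \<in> {..<n}"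
    then have "a - i - 1 = b + (n - Suc i)" using a by simp
    then show "Zv ^ b * Zbv ^ b * (Zv ^ (n - Suc i) * u ^ i) = const2 ((- w) ^ i) * Zv ^ (a - i - 1) * Zbv ^ (b + i)"
      by (simp add: u_def const2_power power_add power_mult_distrib mult_ac)
  qed
  finally show ?thesis by (simp add: a)
qed

lemma reflection_difference_monomial_le:
  assumes "w \<noteq> 0" "a \<le> b"
  shows "Zv ^ a * Zbv ^ b - reflection w (Zv ^ a * Zbv ^ b)
    = (Zv + const2 w * Zbv) * - (\<Sum>i=1..b - a. const2 ((- inverse w) ^ i) * Zv ^ (a + i - 1) * Zbv ^ (b - i))"
proof -
  obtain n where b: "b = a + n" using assms(2) le_Suc_ex by blast
  define v where "v = const2 (- inverse w) * Zv"
  have v_power: "v ^ i = const2 ((- inverse w) ^ i) * Zv ^ i" for i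
    by (simp add: v_def const2_power power_mult_distrib)
  have factor: "Zbv - v = const2 (inverse w) * (Zv + const2 w * Zbv)"
    using assms(1) by (simp add: v_def const2_1 const2_minus algebra_simps flip: const2_mult)
  have "(- w) ^ a * (- inverse w) ^ (a + n) = (- inverse w) ^ n"
    using assms(1) by (simp add: power_add power_mult_distrib[symmetric])
  then have "reflection w (Zv ^ a * Zbv ^ b) = const2 ((- inverse w) ^ n) * Zv ^ (a + n) * Zbv ^ a"
    by (simp add: reflection_monomial b)
  also have "\<dots> = Zv ^ a * Zbv ^ a * v ^ n"
    by (simp add: v_power power_add mult_ac)
  finally have "Zv ^ a * Zbv ^ b - reflection w (Zv ^ a * Zbv ^ b) = Zv ^ a * Zbv ^ a * (Zbv ^ n - v ^ n)"
    by (simp add: b power_add algebra_simps)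
  also have "\<dots> = (Zv + const2 w * Zbv)
      * (\<Sum>i<n. const2 (inverse w) * Zv ^ a * Zbv ^ a * (Zbv ^ (n - Suc i) * v ^ i))"
    by (simp add: power_diff_factor factor sum_distrib_left mult_ac)
  also have "(\<Sum>i<n. const2 (inverse w) * Zv ^ a * Zbv ^ a * (Zbv ^ (n - Suc i) * v ^ i))
      = (\<Sum>i<n. - (const2 ((- inverse w) ^ Suc i) * Zv ^ (a + Suc i - 1) * Zbv ^ (b - Suc i)))"
  proof (intro sum.cong refl)
    fix i assume "i \<in> {..<n}"
    then have "b - Suc i = a + (n - Suc i)" using b by simp
    then show "const2 (inverse w) * Zv ^ a * Zbv ^ a * (Zbv ^ (n - Suc i) * v ^ i)
        = - (const2 ((- inverse w) ^ Suc i) * Zv ^ (a + Suc i - 1) * Zbv ^ (b - Suc i))"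
      by (simp add: v_power const2_minus const2_mult const2_power power_add mult_ac)
  qed
  also have "\<dots> = - (\<Sum>i=1..b - a. const2 ((- inverse w) ^ i) * Zv ^ (a + i - 1) * Zbv ^ (b - i))"
    by (simp add: b sum.atLeast1_atMost_eq sum_negf)
  finally show ?thesis .
qed

lemma sum_powers_neg_root_of_unity:
  fixes x :: "'a::field"
  assumes "x ^ m = 1"
  shows "(\<Sum>j<m. (- (x ^ j)) ^ i) = (if x ^ i = 1 then of_nat m * (- 1) ^ i else 0)"
proof -
  have "(\<Sum>j<m. (- (x ^ j)) ^ i) = (- 1) ^ i * (\<Sum>j<m. (x ^ i) ^ j)"
    unfolding sum_distrib_left by (intro sum.cong refl) (metis power_minus power_mult mult.commute)
  moreover have "(x ^ i) ^ m = 1"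
    using assms by (metis power_mult mult.commute power_one)
  ultimately show ?thesis by (simp add: geometric_sum)
qed

lemma zeta_power: "zeta m ^ k = cis (2 * pi * (real k / real m))"
  by (simp add: zeta_def DeMoivre mult_ac)

lemma zeta_power_eq_1_iff:
  assumes "m > 0"
  shows "zeta m ^ k = 1 \<longleftrightarrow> m dvd k"
proof
  assume "zeta m ^ k = 1"
  then have "cos (2 * pi * (real k / real m)) = 1"
    unfolding zeta_power by (metis cis.sel(1) one_complex.sel(1))
  then obtain n :: int where "2 * pi * (real k / real m) = n * 2 * pi"
    by (auto simp: cos_one_2pi_int)
  then have "(2 * pi) * (real k / real m) = (2 * pi) * real_of_int n" by (simp add: mult_ac)
  then have "real k / real m = real_of_int n" by (simp only: mult_cancel_left) simp
  then have "real_of_int (int k) = real_of_int (n * int m)"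
    using assms by (simp add: divide_eq_eq)
  then have "int k = n * int m" by (simp only: of_int_eq_iff)
  then show "m dvd k" by (metis dvd_triv_right int_dvd_int_iff)
next
  assume "m dvd k"
  then obtain q where "k = m * q" by blast
  then have "zeta m ^ k = cis (2 * pi) ^ q"
    using assms by (simp add: power_mult zeta_power)
  then show "zeta m ^ k = 1" by simp
qed

lemma sum_multiples_reindex:
  fixes m :: nat
  assumes "m > 0"
  shows "(\<Sum>i\<in>{i\<in>A. m dvd i}. f i) = (\<Sum>k\<in>{k. m * k \<in> A}. f (m * k))"
proof -
  have "{i\<in>A. m dvd i} = (*) m ` {k. m * k \<in> A}" by (auto intro: dvd_triv_left)
  then show ?thesis using assms by (simp add: sum.reindex inj_on_def)
qed

lemma reflection_quotient_sum_monomial_ge: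
  assumes "m > 0" "b \<le> a"
  shows "reflection_quotient_sum m (Zv ^ a * Zbv ^ b)
    = const2 (of_nat m) * (\<Sum>k\<in>{k. int (m * k) \<le> int a - int b - 1}.
        const2 ((- 1) ^ (m * k)) * Zv ^ (a - m * k - 1) * Zbv ^ (b + m * k))"
    (is "?lhs = _")
proof -
  define t where "t i = Zv ^ (a - i - 1) * Zbv ^ (b + i)" for i
  have "?lhs = (\<Sum>j<m. \<Sum>i<a - b. const2 ((- (zeta m ^ j)) ^ i) * t i)"
    unfolding reflection_quotient_sum_def
  proof (intro sum.cong refl)
    fix j
    have "zeta m ^ j \<noteq> 0" by (simp add: zeta_def)
    then show "(Zv ^ a * Zbv ^ b - refl_s m j (Zv ^ a * Zbv ^ b)) div (Zv + const2 (zeta m ^ j) * Zbv)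
        = (\<Sum>i<a - b. const2 ((- (zeta m ^ j)) ^ i) * t i)"
      using assms(2)
      by (simp add: refl_s_eq_reflection reflection_difference_monomial_ge root_line_nonzero t_def mult.assoc)
  qed
  also have "\<dots> = (\<Sum>i<a - b. const2 (\<Sum>j<m. (- (zeta m ^ j)) ^ i) * t i)"
    by (subst sum.swap) (simp add: const2_sum sum_distrib_right)
  also have "\<dots> = (\<Sum>i<a - b. const2 (of_nat m) * (if m dvd i then const2 ((- 1) ^ i) * t i else 0))"
    using assms(1) by (intro sum.cong refl)
      (simp add: sum_powers_neg_root_of_unity zeta_power_eq_1_iff const2_0 const2_mult mult.assoc)
  also have "\<dots> = const2 (of_nat m) * (\<Sum>i\<in>{i\<in>{..<a - b}. m dvd i}. const2 ((- 1) ^ i) * t i)"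
    by (simp only: sum_distrib_left[symmetric] sum.inter_filter finite_lessThan)
  also have "\<dots> = const2 (of_nat m) * (\<Sum>k\<in>{k. m * k \<in> {..<a - b}}. const2 ((- 1) ^ (m * k)) * t (m * k))"
    by (simp only: sum_multiples_reindex[OF assms(1)])
  also have "{k. m * k \<in> {..<a - b}} = {k. int (m * k) \<le> int a - int b - 1}"
    using assms(2) by (auto simp flip: of_nat_mult)
  finally show ?thesis by (simp add: t_def mult.assoc)
qed

lemma reflection_quotient_sum_monomial_le:
  assumes "m > 0" "a \<le> b"
  shows "reflection_quotient_sum m (Zv ^ a * Zbv ^ b)
    = - (const2 (of_nat m) * (\<Sum>k\<in>{k. 1 \<le> k \<and> m * k \<le> b - a}.
        const2 ((- 1) ^ (m * k)) * Zv ^ (a + m * k - 1) * Zbv ^ (b - m * k)))"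
    (is "?lhs = _")
proof -
  define t where "t i = Zv ^ (a + i - 1) * Zbv ^ (b - i)" for i
  define x where "x = inverse (zeta m)"
  have x_power_eq_1_iff: "x ^ i = 1 \<longleftrightarrow> m dvd i" for i
    using zeta_power_eq_1_iff[OF assms(1)] by (simp add: x_def power_inverse)
  then have x_root: "x ^ m = 1" by simp
  have "?lhs = (\<Sum>j<m. - (\<Sum>i=1..b - a. const2 ((- (x ^ j)) ^ i) * t i))"
    unfolding reflection_quotient_sum_def
  proof (intro sum.cong refl)
    fix j
    have "zeta m ^ j \<noteq> 0" by (simp add: zeta_def)
    then show "(Zv ^ a * Zbv ^ b - refl_s m j (Zv ^ a * Zbv ^ b)) div (Zv + const2 (zeta m ^ j) * Zbv)
        = - (\<Sum>i=1..b - a. const2 ((- (x ^ j)) ^ i) * t i)"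
      using assms(2)
      by (simp add: refl_s_eq_reflection reflection_difference_monomial_le root_line_nonzero
          t_def x_def power_inverse mult.assoc del: mult_minus_right)
  qed
  also have "\<dots> = - (\<Sum>i=1..b - a. const2 (\<Sum>j<m. (- (x ^ j)) ^ i) * t i)"
    unfolding sum_negf by (subst sum.swap) (simp add: const2_sum sum_distrib_right)
  also have "\<dots> = - (\<Sum>i=1..b - a. const2 (of_nat m) * (if m dvd i then const2 ((- 1) ^ i) * t i else 0))"
    by (intro arg_cong[where f = uminus] sum.cong refl)
      (simp add: sum_powers_neg_root_of_unity x_root x_power_eq_1_iff const2_0 const2_mult mult.assoc)
  also have "\<dots> = - (const2 (of_nat m) * (\<Sum>i\<in>{i\<in>{1..b - a}. m dvd i}. const2 ((- 1) ^ i) * t i))"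
    by (simp only: sum_distrib_left[symmetric] sum.inter_filter finite_atLeastAtMost)
  also have "\<dots> = - (const2 (of_nat m) * (\<Sum>k\<in>{k. m * k \<in> {1..b - a}}. const2 ((- 1) ^ (m * k)) * t (m * k)))"
    by (simp only: sum_multiples_reindex[OF assms(1)])
  also have "{k. m * k \<in> {1..b - a}} = {k. 1 \<le> k \<and> m * k \<le> b - a}"
    using assms(1) by (auto simp: Suc_le_eq)
  finally show ?thesis by (simp add: t_def mult.assoc)
qed

theorem proposition2p3:
  fixes m a b :: nat and c :: complex
  assumes "m \<ge> 2"
  shows "(b \<le> a \<longrightarrow>
           dunklY m c (Zv ^ a * Zbv ^ b) =
             const2 (of_nat a) * Zv ^ (a - 1) * Zbv ^ b
             - const2 (of_nat m * c) *
               (\<Sum>k\<in>{k::nat. int (m * k) \<le> int a - int b - 1}.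
                  const2 ((-1) ^ (m * k)) * Zv ^ (a - m * k - 1) * Zbv ^ (b + m * k)))
       \<and> (a \<le> b \<longrightarrow>
           dunklY m c (Zv ^ a * Zbv ^ b) =
             const2 (of_nat a) * Zv ^ (a - 1) * Zbv ^ b
             + const2 (of_nat m * c) *
               (\<Sum>k\<in>{k::nat. 1 \<le> k \<and> m * k \<le> b - a}.
                  const2 ((-1) ^ (m * k)) * Zv ^ (a + m * k - 1) * Zbv ^ (b - m * k)))"
proof -
  have m: "m > 0" using assms by simp
  show ?thesis
    unfolding dunklY_eq pderiv_monomial
    using reflection_quotient_sum_monomial_ge[OF m] reflection_quotient_sum_monomial_le[OF m]
    by (simp add: const2_mult mult_ac)
qed

end
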